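(* Let $d\ge2$ and, for each $N$, let $x_1,\dots,x_N\in\mathbb{R}^d$ be pairwise distinct with real charges $d_1,\dots,d_N$ (not all zero), $M_N=\sum|d_i|$, and $\mu_N=\frac1{M_N}\sum_id_i\delta_{x_i}$. Assume $$\sup_N\Big[\frac1{2M_N^2}\sum_{i=1}^N\sum_{j\ne i}|d_i||d_j|\big(g(x_i-x_j)+|F(x_i-x_j)|\big)+\frac1{M_N}\sum_{i=1}^N|d_i|V(x_i)\Big]<+\infty.$$ Then $(\mu_N)_N$ is tight.
   Context: $g(x)=-\log|x|$ ($d=2$), $g(x)=|x|^{2-d}$ ($d\ge3$). $F\in C^1(\mathbb{R}^d)$ with $F(-x)=F(x)$; $V\in C^1(\mathbb{R}^d)$ bounded from below with $\lim_{|x|\to\infty}(V(x)/2+g(x))=+\infty$. A family of signed measures is tight if for every $\varepsilon>0$ there is a compact $K$ with $\sup_N|\mu_N|(\mathbb{R}^d\setminus K)<\varepsilon$, $|\mu|$ the variation measure. *)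

theory Defs
  imports "HOL-Analysis.Analysis"
begin

definition kernel_g :: "'a::euclidean_space \<Rightarrow> real" where
  "kernel_g x = (if DIM('a) = 2 then - ln (norm x) else norm x powr (2 - real DIM('a)))"

definition C1_fun :: "('a::euclidean_space \<Rightarrow> real) \<Rightarrow> bool" where
  "C1_fun f \<longleftrightarrow> (\<exists>f' :: 'a \<Rightarrow> ('a \<Rightarrow>\<^sub>L real).
      (\<forall>x. (f has_derivative blinfun_apply (f' x)) (at x)) \<and> continuous_on UNIV f')"

definition mass :: "(nat \<Rightarrow> real) \<Rightarrow> nat \<Rightarrow> real" where
  "mass dc N = (\<Sum>i\<in>{1..N}. \<bar>dc i\<bar>)"

text \<open>Variation measure |mu_N|(A) of mu_N = (1/M_N) sum_i d_i delta_{x_i}, for pairwise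
  distinct points x_i: it equals (1/M_N) sum of |d_i| over those i with x_i in A.\<close>
definition var_measure :: "nat \<Rightarrow> (nat \<Rightarrow> 'a) \<Rightarrow> (nat \<Rightarrow> real) \<Rightarrow> 'a set \<Rightarrow> real" where
  "var_measure N x dc A = (\<Sum>i\<in>{i\<in>{1..N}. x i \<in> A}. \<bar>dc i\<bar>) / mass dc N"

definition energy :: "('a::euclidean_space \<Rightarrow> real) \<Rightarrow> ('a \<Rightarrow> real) \<Rightarrow> nat \<Rightarrow> (nat \<Rightarrow> 'a) \<Rightarrow> (nat \<Rightarrow> real) \<Rightarrow> real" where
  "energy F V N x dc =
     1 / (2 * (mass dc N)\<^sup>2) * (\<Sum>i\<in>{1..N}. \<Sum>j\<in>{1..N} - {i}.
        \<bar>dc i\<bar> * \<bar>dc j\<bar> * (kernel_g (x i - x j) + \<bar>F (x i - x j)\<bar>))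
     + 1 / mass dc N * (\<Sum>i\<in>{1..N}. \<bar>dc i\<bar> * V (x i))"

end

theory Submission
  imports Defs
begin

text \<open>Let \<open>w(y) = ln (1 + |y|)\<close> for \<open>d = 2\<close> and \<open>w = 0\<close> for \<open>d \<ge> 3\<close>
  (\<open>log_weight\<close>). Then \<open>g(a - b) \<ge> - (w a + w b)\<close>, so the pair part of the energy is at
  least \<open>-(1/M\<^sub>N) \<Sum> |d\<^sub>i| w(x\<^sub>i)\<close> and the energy dominates
  \<open>(1/M\<^sub>N) \<Sum> |d\<^sub>i| h(x\<^sub>i)\<close> with \<open>h = V - w\<close>. The growth condition on \<open>V/2 + g\<close> makes
  \<open>h\<close> coercive and bounded below, and a Markov inequality then bounds the mass of \<open>|\<mu>\<^sub>N|\<close>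
  outside a large ball uniformly in \<open>N\<close>.\<close>

definition log_weight :: "'a::euclidean_space \<Rightarrow> real" where
  "log_weight y = (if DIM('a) = 2 then ln (1 + norm y) else 0)"

lemma log_weight_nonneg: "log_weight y \<ge> 0"
  unfolding log_weight_def by auto

lemma kernel_g_diff_ge:
  fixes a b :: "'a::euclidean_space"
  assumes "a \<noteq> b"
  shows "kernel_g (a - b) \<ge> - (log_weight a + log_weight b)"
proof (cases "DIM('a) = 2")
  case True
  have "norm (a - b) \<le> norm a + norm b" by (rule norm_triangle_ineq4)
  also have "\<dots> \<le> (1 + norm a) * (1 + norm b)" by (simp add: algebra_simps)
  finally have "ln (norm (a - b)) \<le> ln ((1 + norm a) * (1 + norm b))"
    using assms by (subst ln_le_cancel_iff) (auto intro!: mult_pos_pos add_pos_nonneg)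
  also have "\<dots> = ln (1 + norm a) + ln (1 + norm b)"
    by (rule ln_mult_pos) (auto intro: add_pos_nonneg)
  finally show ?thesis using True unfolding kernel_g_def log_weight_def by simp
qed (simp add: kernel_g_def log_weight_def)

lemma log_weight_le_kernel_g:
  fixes y :: "'a::euclidean_space"
  assumes "DIM('a) \<ge> 2" and "norm y \<ge> 2"
  shows "log_weight y \<le> 2 - 2 * kernel_g y"
proof (cases "DIM('a) = 2")
  case True
  have "1 + norm y \<le> norm y * norm y"
    using assms(2) mult_right_mono[of 2 "norm y" "norm y"] by linarith
  then have "ln (1 + norm y) \<le> ln (norm y * norm y)"
    using assms(2) by (subst ln_le_cancel_iff) auto
  also have "\<dots> = 2 * ln (norm y)" using assms(2) by (subst ln_mult_pos) auto
  finally show ?thesis using True unfolding kernel_g_def log_weight_def by simp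
next
  case False
  have "norm y powr (2 - real DIM('a)) \<le> norm y powr 0"
    using assms by (intro powr_mono) auto
  then show ?thesis
    using False assms(2) unfolding kernel_g_def log_weight_def by (auto split: if_splits)
qed

lemma coercive_V_minus_log_weight:
  fixes V :: "'a::euclidean_space \<Rightarrow> real"
  assumes "DIM('a) \<ge> 2"
    and "filterlim (\<lambda>y. V y / 2 + kernel_g y) at_top at_infinity"
  shows "filterlim (\<lambda>y. V y - log_weight y) at_top at_infinity"
proof (subst filterlim_at_top, intro allI)
  fix R :: real
  have "eventually (\<lambda>y. V y / 2 + kernel_g y \<ge> R / 2 + 1) at_infinity"
    using assms(2) by (simp add: filterlim_at_top)
  moreover have "eventually (\<lambda>y. norm y \<ge> 2) (at_infinity :: 'a filter)"
    by (auto simp: eventually_at_infinity)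
  ultimately show "eventually (\<lambda>y. V y - log_weight y \<ge> R) at_infinity"
    by eventually_elim (use log_weight_le_kernel_g[OF assms(1)] in force)
qed

lemma bdd_below_V_minus_log_weight:
  fixes V :: "'a::euclidean_space \<Rightarrow> real"
  assumes "bdd_below (range V)"
    and "filterlim (\<lambda>y. V y - log_weight y) at_top at_infinity"
  shows "bdd_below (range (\<lambda>y. V y - log_weight y))"
proof -
  obtain c where c: "\<And>y. c \<le> V y"
    using assms(1) unfolding bdd_below_def by auto
  obtain r where r: "\<And>y. r \<le> norm y \<Longrightarrow> V y - log_weight y \<ge> 0"
    using assms(2) unfolding filterlim_at_top eventually_at_infinity by blast
  have "V y - log_weight y \<ge> min 0 (c - ln (1 + max 0 r))" for y
  proof (cases "r \<le> norm y")
    case False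
    then have "log_weight y \<le> ln (1 + max 0 r)"
      unfolding log_weight_def by (auto simp: add_pos_nonneg)
    then show ?thesis using c[of y] by linarith
  qed (use r in force)
  then show ?thesis by (intro bdd_belowI2)
qed

lemma sum_offdiag_ge:
  fixes a L :: "'i \<Rightarrow> real" and k :: "'i \<Rightarrow> 'i \<Rightarrow> real"
  assumes "finite I" and a: "\<And>i. i \<in> I \<Longrightarrow> a i \<ge> 0" and "\<And>i. i \<in> I \<Longrightarrow> L i \<ge> 0"
    and k: "\<And>i j. i \<in> I \<Longrightarrow> j \<in> I \<Longrightarrow> i \<noteq> j \<Longrightarrow> k i j \<ge> - (L i + L j)"
  shows "(\<Sum>i\<in>I. \<Sum>j\<in>I - {i}. a i * a j * k i j) \<ge> - 2 * sum a I * (\<Sum>i\<in>I. a i * L i)"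
proof -
  have "(\<Sum>i\<in>I. \<Sum>j\<in>I. a i * a j * (L i + L j))
      = (\<Sum>i\<in>I. \<Sum>j\<in>I. (a i * L i) * a j + a i * (a j * L j))"
    by (intro sum.cong refl) (simp add: algebra_simps)
  also have "\<dots> = 2 * sum a I * (\<Sum>i\<in>I. a i * L i)"
    by (simp only: sum.distrib sum_product[symmetric]) (simp add: algebra_simps)
  finally have "- 2 * sum a I * (\<Sum>i\<in>I. a i * L i) = - (\<Sum>i\<in>I. \<Sum>j\<in>I. a i * a j * (L i + L j))"
    by simp
  also have "\<dots> \<le> - (\<Sum>i\<in>I. \<Sum>j\<in>I - {i}. a i * a j * (L i + L j))"
    using assms by (intro le_imp_neg_le sum_mono sum_mono2) auto
  also have "\<dots> \<le> (\<Sum>i\<in>I. \<Sum>j\<in>I - {i}. a i * a j * k i j)"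
    unfolding sum_negf[symmetric]
  proof (intro sum_mono)
    fix i j assume "i \<in> I" "j \<in> I - {i}"
    then show "- (a i * a j * (L i + L j)) \<le> a i * a j * k i j"
      using mult_left_mono[OF k, of i j "a i * a j"] a by (auto simp: algebra_simps)
  qed
  finally show ?thesis .
qed

lemma mass_pos:
  assumes "\<exists>i\<in>{1..N}. ds i \<noteq> 0"
  shows "mass ds N > 0"
  using assms unfolding mass_def by (auto intro: sum_pos2)

lemma energy_ge_weighted_sum:
  fixes xs :: "nat \<Rightarrow> 'a::euclidean_space" and F V :: "'a \<Rightarrow> real"
  assumes M: "mass ds N > 0"
    and distinct: "\<And>i j. i \<in> {1..N} \<Longrightarrow> j \<in> {1..N} \<Longrightarrow> i \<noteq> j \<Longrightarrow> xs i \<noteq> xs j"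
  shows "energy F V N xs ds
           \<ge> (\<Sum>i\<in>{1..N}. \<bar>ds i\<bar> * (V (xs i) - log_weight (xs i))) / mass ds N"
proof -
  define M where "M = mass ds N"
  define P where "P = (\<Sum>i\<in>{1..N}. \<bar>ds i\<bar> * log_weight (xs i))"
  define S where "S = (\<Sum>i\<in>{1..N}. \<Sum>j\<in>{1..N} - {i}.
        \<bar>ds i\<bar> * \<bar>ds j\<bar> * (kernel_g (xs i - xs j) + \<bar>F (xs i - xs j)\<bar>))"
  have "S \<ge> - 2 * M * P"
    unfolding S_def M_def P_def mass_def
  proof (rule sum_offdiag_ge)
    fix i j assume "i \<in> {1..N}" "j \<in> {1..N}" "i \<noteq> j"
    then show "kernel_g (xs i - xs j) + \<bar>F (xs i - xs j)\<bar> \<ge> - (log_weight (xs i) + log_weight (xs j))"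
      using kernel_g_diff_ge[of "xs i" "xs j"] distinct by fastforce
  qed (auto simp: log_weight_nonneg)
  then have "S / (2 * M\<^sup>2) \<ge> - P / M"
    using M by (auto simp: M_def field_simps power2_eq_square)
  then show ?thesis
    unfolding energy_def S_def[symmetric] M_def[symmetric] P_def
    by (simp add: diff_divide_distrib sum_subtractf algebra_simps)
qed

lemma weighted_markov:
  fixes a h :: "'i \<Rightarrow> real"
  assumes "finite I" and a: "\<And>i. i \<in> I \<Longrightarrow> a i \<ge> 0"
    and lower: "\<And>i. i \<in> I \<Longrightarrow> h i \<ge> - B" and "B \<ge> 0"
    and tail: "\<And>i. i \<in> I \<Longrightarrow> P i \<Longrightarrow> h i \<ge> R"
  shows "R * (\<Sum>i\<in>{i\<in>I. P i}. a i) \<le> (\<Sum>i\<in>I. a i * h i) + B * sum a I"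
proof -
  have "R * (\<Sum>i\<in>{i\<in>I. P i}. a i) \<le> (\<Sum>i\<in>{i\<in>I. P i}. a i * (h i + B))"
    unfolding sum_distrib_left
  proof (intro sum_mono)
    fix i assume "i \<in> {i \<in> I. P i}"
    then have "R \<le> h i + B" "a i \<ge> 0" using a tail \<open>B \<ge> 0\<close> by force+
    then show "R * a i \<le> a i * (h i + B)" by (metis mult.commute mult_left_mono)
  qed
  also have "\<dots> \<le> (\<Sum>i\<in>I. a i * (h i + B))"
  proof (rule sum_mono2[OF \<open>finite I\<close>])
    fix i assume "i \<in> I - {i \<in> I. P i}"
    then show "0 \<le> a i * (h i + B)" using a lower by (intro mult_nonneg_nonneg) force+
  qed auto
  also have "\<dots> = (\<Sum>i\<in>I. a i * h i) + B * sum a I"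
    by (simp add: algebra_simps sum.distrib sum_distrib_left)
  finally show ?thesis .
qed

lemma var_measure_outside_le:
  fixes xs :: "nat \<Rightarrow> 'a::euclidean_space" and F V :: "'a \<Rightarrow> real"
  assumes M: "mass ds N > 0"
    and distinct: "\<And>i j. i \<in> {1..N} \<Longrightarrow> j \<in> {1..N} \<Longrightarrow> i \<noteq> j \<Longrightarrow> xs i \<noteq> xs j"
    and "\<And>y. V y - log_weight y \<ge> - B" and "B \<ge> 0"
    and "\<And>y. y \<notin> K \<Longrightarrow> V y - log_weight y \<ge> R"
  shows "R * var_measure N xs ds (UNIV - K) \<le> energy F V N xs ds + B"
proof -
  have "R * (\<Sum>i\<in>{i\<in>{1..N}. xs i \<in> UNIV - K}. \<bar>ds i\<bar>)
      \<le> (\<Sum>i\<in>{1..N}. \<bar>ds i\<bar> * (V (xs i) - log_weight (xs i))) + B * mass ds N"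
    unfolding mass_def using assms by (intro weighted_markov) auto
  also have "\<dots> \<le> (energy F V N xs ds + B) * mass ds N"
  proof -
    have "(\<Sum>i\<in>{1..N}. \<bar>ds i\<bar> * (V (xs i) - log_weight (xs i))) / mass ds N \<le> energy F V N xs ds"
      by (rule energy_ge_weighted_sum[OF M distinct])
    then show ?thesis using M by (simp add: divide_le_eq algebra_simps)
  qed
  finally show ?thesis
    using M unfolding var_measure_def by (simp add: field_simps)
qed

theorem lemma3p1:
  fixes F V :: "'a::euclidean_space \<Rightarrow> real"
    and x :: "nat \<Rightarrow> nat \<Rightarrow> 'a" and dc :: "nat \<Rightarrow> nat \<Rightarrow> real"
  assumes dim: "DIM('a) \<ge> 2"
    and F_C1: "C1_fun F" and F_even: "\<And>y. F (- y) = F y"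
    and V_C1: "C1_fun V" and V_below: "bdd_below (range V)"
    and V_lim: "filterlim (\<lambda>y. V y / 2 + kernel_g y) at_top at_infinity"
    and distinct: "\<And>N i j. N \<ge> 1 \<Longrightarrow> i \<in> {1..N} \<Longrightarrow> j \<in> {1..N} \<Longrightarrow> i \<noteq> j \<Longrightarrow> x N i \<noteq> x N j"
    and nonzero: "\<And>N. N \<ge> 1 \<Longrightarrow> \<exists>i\<in>{1..N}. dc N i \<noteq> 0"
    and bounded: "bdd_above ((\<lambda>N. energy F V N (x N) (dc N)) ` {1..})"
  shows "\<forall>\<epsilon>>0. \<exists>K. compact K \<and>
           (SUP N\<in>{1..}. var_measure N (x N) (dc N) (UNIV - K)) < \<epsilon>"
proof (intro allI impI)
  fix \<epsilon> :: real assume "\<epsilon> > 0"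
  have coercive: "filterlim (\<lambda>y. V y - log_weight y) at_top at_infinity"
    using coercive_V_minus_log_weight[OF dim V_lim] .
  obtain C where C: "\<And>N. N \<ge> 1 \<Longrightarrow> energy F V N (x N) (dc N) \<le> C"
    using bounded unfolding bdd_above_def by auto
  obtain c where c: "\<And>y. c \<le> V y - log_weight y"
    using bdd_below_V_minus_log_weight[OF V_below coercive] unfolding bdd_below_def by auto
  define B where "B = max 0 (- c)"
  have B: "B \<ge> 0" "V y - log_weight y \<ge> - B" for y
    using c[of y] unfolding B_def by auto
  define R where "R = 2 * (\<bar>C\<bar> + B + 1) / \<epsilon>"
  have "R > 0" and R_eps: "R * (\<epsilon> / 2) = \<bar>C\<bar> + B + 1"
    using \<open>\<epsilon> > 0\<close> B(1) by (simp_all add: R_def)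
  obtain r where r: "\<And>y. r \<le> norm y \<Longrightarrow> V y - log_weight y \<ge> R"
    using coercive unfolding filterlim_at_top eventually_at_infinity by blast
  have "var_measure N (x N) (dc N) (UNIV - cball 0 r) \<le> \<epsilon> / 2" if "N \<ge> 1" for N
  proof -
    have "R * var_measure N (x N) (dc N) (UNIV - cball 0 r) \<le> energy F V N (x N) (dc N) + B"
      using \<open>N \<ge> 1\<close> r
      by (intro var_measure_outside_le mass_pos nonzero distinct B) (auto simp: not_le)
    also have "\<dots> \<le> C + B" using C \<open>N \<ge> 1\<close> by simp
    also have "\<dots> \<le> R * (\<epsilon> / 2)" unfolding R_eps by linarith
    finally show ?thesis using \<open>R > 0\<close> by simp
  qed
  then have "(SUP N\<in>{1..}. var_measure N (x N) (dc N) (UNIV - cball 0 r)) \<le> \<epsilon> / 2"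
    by (intro cSUP_least) auto
  then show "\<exists>K. compact K \<and> (SUP N\<in>{1..}. var_measure N (x N) (dc N) (UNIV - K)) < \<epsilon>"
    using \<open>\<epsilon> > 0\<close> by (intro exI[of _ "cball 0 r"]) auto
qed

end
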